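(* Let $n\geq 2$ and write $p_{n+1} = k_n d_n + r_n$ with integers $k_n\ge 0$ and $1\leq r_n < d_n$ (division of $p_{n+1}$ by $d_n$). Each of the following statements is equivalent to $d_n^2 < 2p_{n+1}$: 1. The number of odd positive integers $m\le p_n$ with $m\,p_{n+1} > p_n^2$ equals $d_n/2$; that is, the smallest odd multiple of $p_{n+1}$ greater than $p_n^2$ is $(p_n - (d_n-2))\,p_{n+1}$. 2. $(d_n-2)\,p_{n+1}$ is the largest even multiple of $p_{n+1}$ that is at most $d_n p_n$. 3. $k_n \geq d_n/2$.
   Context: $p_n$ denotes the $n$th prime ($p_1=2$) and $d_n := p_{n+1}-p_n$. *)

theory Defs
  imports "HOL-Computational_Algebra.Primes" "HOL-Library.Infinite_Set"
begin

text \<open>p n is the n-th prime, 1-indexed: p 1 = 2.\<close>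
definition p :: "nat \<Rightarrow> nat" where
  "p n = enumerate {q::nat. prime q} (n - 1)"

definition d :: "nat \<Rightarrow> nat" where
  "d n = p (Suc n) - p n"

end

theory Submission
  imports Defs
begin

text \<open>
  Write P = p n, Q = p (n + 1) = P + d. For every m,
  m Q - P^2 = (m + d - P) Q - d^2,
  so an odd multiple m Q exceeds P^2 iff its even shift t = m + d - P satisfies t Q > d^2.
  Since t = 0 never works, the smallest admissible shift is t = 2 exactly when d^2 < 2 Q;
  this fixes the least odd multiple above P^2 at (P - d + 2) Q, and hence the number d/2 of
  odd m \<le> P beyond it. Likewise (d - 2) Q = d P + d^2 - 2 Q, so (d - 2) Q \<le> d P iff
  d^2 \<le> 2 Q, and equality is excluded by parity. Finally, as Q = k d + r with 0 < r < d
  and d even, d^2 < 2 Q holds iff d \<le> 2 k.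
\<close>

lemma prime_p: "prime (p n)"
  unfolding p_def using enumerate_in_set[OF primes_infinite] by simp

lemma p_less_p_Suc: "1 \<le> n \<Longrightarrow> p n < p (Suc n)"
  unfolding p_def using enumerate_step[OF primes_infinite, of "n - 1"] by simp

lemma p_gt_2: "2 \<le> n \<Longrightarrow> 2 < p n"
proof -
  assume "2 \<le> n"
  then have "p 1 < p n"
    unfolding p_def by (simp add: enumerate_mono[OF _ primes_infinite])
  moreover have "2 \<le> p 1" using prime_p prime_ge_2_nat by blast
  ultimately show "2 < p n" by simp
qed

lemma twice_quotient_ge_iff:
  fixes d k r Q :: nat
  assumes "even d" "Q = k * d + r" "1 \<le> r" "r < d"
  shows "d \<le> 2 * k \<longleftrightarrow> d\<^sup>2 < 2 * Q"
proof
  assume "d \<le> 2 * k"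
  then have "d * d \<le> 2 * (k * d)" using mult_right_mono[of d "2 * k" d] by simp
  then show "d\<^sup>2 < 2 * Q" using assms unfolding power2_eq_square by linarith
next
  assume less: "d\<^sup>2 < 2 * Q"
  show "d \<le> 2 * k"
  proof (rule ccontr)
    assume "\<not> d \<le> 2 * k"
    with \<open>even d\<close> have "2 * k + 2 \<le> d" by presburger
    then have "(2 * k + 2) * d \<le> d * d" using mult_right_mono by blast
    then show False using assms less unfolding power2_eq_square by (simp add: algebra_simps)
  qed
qed

lemma odd_between_eq_image:
  fixes P c :: nat
  assumes "odd P"
  shows "{m. odd m \<and> m \<le> P \<and> P < m + 2 * c} = (\<lambda>i. P - 2 * i) ` {i. i < c \<and> 2 * i < P}"
proof (intro set_eqI iffI)
  fix m assume "m \<in> {m. odd m \<and> m \<le> P \<and> P < m + 2 * c}"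
  with assms have "m = P - 2 * ((P - m) div 2)" "(P - m) div 2 \<in> {i. i < c \<and> 2 * i < P}"
    by auto presburger+
  then show "m \<in> (\<lambda>i. P - 2 * i) ` {i. i < c \<and> 2 * i < P}" by blast
qed (use assms in auto)

lemma card_odd_between_le:
  fixes P c :: nat
  assumes "odd P"
  shows "card {m. odd m \<and> m \<le> P \<and> P < m + 2 * c} \<le> c"
proof -
  have "card {m. odd m \<and> m \<le> P \<and> P < m + 2 * c} \<le> card {i. i < c \<and> 2 * i < P}"
    unfolding odd_between_eq_image[OF assms] by (rule card_image_le) simp
  also have "\<dots> \<le> card {..<c}" by (intro card_mono) auto
  finally show ?thesis by simp
qed

lemma card_odd_between:
  fixes P c :: nat
  assumes "odd P" "2 * c \<le> P + 1"
  shows "card {m. odd m \<and> m \<le> P \<and> P < m + 2 * c} = c"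
proof -
  have "{i. i < c \<and> 2 * i < P} = {..<c}" using assms by auto
  moreover have "inj_on (\<lambda>i. P - 2 * i) {..<c}" using assms by (intro inj_onI) auto
  ultimately show ?thesis unfolding odd_between_eq_image[OF assms(1)] by (simp add: card_image)
qed

locale odd_gap =
  fixes P Q d :: nat
  assumes odd_P: "odd P" and even_d: "even d" and d_pos: "0 < d" and Q_eq: "Q = P + d"
begin

lemma odd_Q: "odd Q"
  using odd_P even_d Q_eq by simp

lemma two_le_d: "2 \<le> d"
  using even_d d_pos by presburger

lemma sq_less_mult_iff_shift:
  "P\<^sup>2 < m * Q \<longleftrightarrow> int d ^ 2 < (int m + int d - int P) * int Q"
proof -
  have "int m * int Q - int P ^ 2 = (int m + int d - int P) * int Q - int d ^ 2"
    using Q_eq by (simp add: algebra_simps power2_eq_square)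
  moreover have "P\<^sup>2 < m * Q \<longleftrightarrow> int P ^ 2 < int m * int Q"
    by (metis of_nat_less_iff of_nat_mult of_nat_power)
  ultimately show ?thesis by linarith
qed

lemma gap_sq_less_iff_int: "d\<^sup>2 < 2 * Q \<longleftrightarrow> int d ^ 2 < 2 * int Q"
  by (metis of_nat_less_iff of_nat_mult of_nat_numeral of_nat_power)

lemma d_minus_2_less_P:
  assumes "d\<^sup>2 < 2 * Q"
  shows "d - 2 < P"
proof (rule ccontr)
  assume "\<not> d - 2 < P"
  then have "2 * int Q \<le> 4 * int d - 4" using Q_eq two_le_d by linarith
  moreover have "0 \<le> (int d - 2)\<^sup>2" by simp
  ultimately show False
    using assms unfolding gap_sq_less_iff_int by (simp add: power2_eq_square algebra_simps)
qed

lemma sq_less_odd_mult_iff: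
  assumes "d\<^sup>2 < 2 * Q" "odd m"
  shows "P\<^sup>2 < m * Q \<longleftrightarrow> P < m + d"
proof -
  define t where "t = int m + int d - int P"
  have "even t" unfolding t_def using assms(2) odd_P even_d by simp
  have "P\<^sup>2 < m * Q \<longleftrightarrow> int d ^ 2 < t * int Q"
    unfolding t_def by (rule sq_less_mult_iff_shift)
  also have "\<dots> \<longleftrightarrow> 0 < t"
  proof
    assume "int d ^ 2 < t * int Q"
    then show "0 < t" by (smt (verit) mult_nonpos_nonneg of_nat_0_le_iff zero_le_power2)
  next
    assume "0 < t"
    with \<open>even t\<close> have "2 * int Q \<le> t * int Q" by (intro mult_right_mono) presburger+
    then show "int d ^ 2 < t * int Q" using assms(1) unfolding gap_sq_less_iff_int by linarith
  qed
  also have "\<dots> \<longleftrightarrow> P < m + d" unfolding t_def by linarith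
  finally show ?thesis .
qed

lemma sq_less_mult_imp_shift_gt_two:
  assumes "2 * Q \<le> d\<^sup>2" "P\<^sup>2 < m * Q"
  shows "P + 2 < m + d"
proof -
  define t where "t = int m + int d - int P"
  have "2 * int Q < t * int Q"
    using assms sq_less_mult_iff_shift[of m] gap_sq_less_iff_int unfolding t_def by linarith
  then have "2 < t" by (simp add: mult_less_cancel_right)
  then show ?thesis unfolding t_def by linarith
qed

lemma card_odd_mult_gt_sq_iff:
  "card {m. odd m \<and> 0 < m \<and> m \<le> P \<and> m * Q > P\<^sup>2} = d div 2 \<longleftrightarrow> d\<^sup>2 < 2 * Q"
proof
  assume card_eq: "card {m. odd m \<and> 0 < m \<and> m \<le> P \<and> m * Q > P\<^sup>2} = d div 2"
  show "d\<^sup>2 < 2 * Q"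
  proof (rule ccontr)
    assume "\<not> d\<^sup>2 < 2 * Q"
    then have "P + 2 < m + d" if "P\<^sup>2 < m * Q" for m
      using sq_less_mult_imp_shift_gt_two that by simp
    then have "{m. odd m \<and> 0 < m \<and> m \<le> P \<and> m * Q > P\<^sup>2}
        \<subseteq> {m. odd m \<and> m \<le> P \<and> P < m + 2 * (d div 2 - 1)}"
      using even_d two_le_d by fastforce
    then have "card {m. odd m \<and> 0 < m \<and> m \<le> P \<and> m * Q > P\<^sup>2}
        \<le> card {m. odd m \<and> m \<le> P \<and> P < m + 2 * (d div 2 - 1)}"
      by (rule card_mono[rotated]) auto
    also have "\<dots> \<le> d div 2 - 1" by (rule card_odd_between_le[OF odd_P])
    finally show False using card_eq two_le_d by simp
  qed
next
  assume less: "d\<^sup>2 < 2 * Q"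
  have "{m. odd m \<and> 0 < m \<and> m \<le> P \<and> m * Q > P\<^sup>2}
      = {m. odd m \<and> m \<le> P \<and> P < m + 2 * (d div 2)}"
    using even_d by (auto simp: sq_less_odd_mult_iff[OF less] odd_pos)
  moreover have "2 * (d div 2) \<le> P + 1" using d_minus_2_less_P[OF less] even_d by simp
  ultimately show "card {m. odd m \<and> 0 < m \<and> m \<le> P \<and> m * Q > P\<^sup>2} = d div 2"
    using card_odd_between[OF odd_P] by simp
qed

lemma least_odd_multiple_gt_sq_iff:
  "(LEAST x. (\<exists>j. odd j \<and> x = j * Q) \<and> x > P\<^sup>2) = (P - (d - 2)) * Q \<longleftrightarrow> d\<^sup>2 < 2 * Q"
proof
  let ?X = "\<lambda>x. (\<exists>j. odd j \<and> x = j * Q) \<and> x > P\<^sup>2"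
  assume least: "Least ?X = (P - (d - 2)) * Q"
  have "?X (P * Q)"
    using odd_P odd_pos[OF odd_P] Q_eq d_pos
    by (auto simp: power2_eq_square intro!: mult_strict_left_mono)
  then have "?X (Least ?X)" by (rule LeastI)
  then have "P\<^sup>2 < (P - (d - 2)) * Q" using least by simp
  moreover from this have "int (P - (d - 2)) + int d - int P = 2"
    using two_le_d by (cases "d - 2 < P") auto
  ultimately show "d\<^sup>2 < 2 * Q" using sq_less_mult_iff_shift gap_sq_less_iff_int by metis
next
  assume less: "d\<^sup>2 < 2 * Q"
  have "d - 2 < P" using d_minus_2_less_P[OF less] .
  then have odd_j0: "odd (P - (d - 2))" using odd_P even_d two_le_d by simp
  show "(LEAST x. (\<exists>j. odd j \<and> x = j * Q) \<and> x > P\<^sup>2) = (P - (d - 2)) * Q"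
  proof (rule Least_equality)
    have "P\<^sup>2 < (P - (d - 2)) * Q"
      using sq_less_odd_mult_iff[OF less odd_j0] \<open>d - 2 < P\<close> two_le_d by simp
    then show "(\<exists>j. odd j \<and> (P - (d - 2)) * Q = j * Q) \<and> (P - (d - 2)) * Q > P\<^sup>2"
      using odd_j0 by blast
  next
    fix y assume "(\<exists>j. odd j \<and> y = j * Q) \<and> y > P\<^sup>2"
    then obtain j where j: "odd j" "y = j * Q" "P\<^sup>2 < j * Q" by blast
    then have "P < j + d" using sq_less_odd_mult_iff[OF less] by blast
    then have "P - (d - 2) \<le> j" using j(1) odd_P even_d by presburger
    then show "(P - (d - 2)) * Q \<le> y" using j(2) by simp
  qed
qed

lemma greatest_even_multiple_le_iff:
  "(d - 2) * Q = (GREATEST x. (\<exists>j. even j \<and> x = j * Q) \<and> x \<le> d * P) \<longleftrightarrow> d\<^sup>2 < 2 * Q"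
proof -
  let ?Y = "\<lambda>x. (\<exists>j. even j \<and> x = j * Q) \<and> x \<le> d * P"
  have "int ((d - 2) * Q) = (int d - 2) * (int P + int d)"
    using Q_eq two_le_d by (simp add: of_nat_diff)
  also have "\<dots> = int (d * P) + int d ^ 2 - 2 * int Q"
    using Q_eq by (simp add: algebra_simps power2_eq_square)
  finally have "int ((d - 2) * Q) = int (d * P) + int d ^ 2 - 2 * int Q" .
  moreover have "(d - 2) * Q \<le> d * P \<longleftrightarrow> int ((d - 2) * Q) \<le> int (d * P)"
    by (rule of_nat_le_iff[symmetric])
  moreover have "d\<^sup>2 \<le> 2 * Q \<longleftrightarrow> int d ^ 2 \<le> 2 * int Q"
    by (metis of_nat_le_iff of_nat_mult of_nat_numeral of_nat_power)
  ultimately have candidate_le_iff: "(d - 2) * Q \<le> d * P \<longleftrightarrow> d\<^sup>2 \<le> 2 * Q"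
    by linarith
  have "d\<^sup>2 \<noteq> 2 * Q"
  proof
    assume "d\<^sup>2 = 2 * Q"
    moreover obtain e where "d = 2 * e" using even_d by blast
    ultimately have "Q = 2 * e\<^sup>2" by (simp add: power2_eq_square)
    then show False using odd_Q by simp
  qed
  then have candidate_le_iff': "(d - 2) * Q \<le> d * P \<longleftrightarrow> d\<^sup>2 < 2 * Q"
    using candidate_le_iff by linarith
  show ?thesis
  proof
    assume greatest: "(d - 2) * Q = Greatest ?Y"
    have "?Y 0" by auto
    then have "?Y (Greatest ?Y)" by (rule GreatestI_nat[where b = "d * P"]) simp
    then show "d\<^sup>2 < 2 * Q" using greatest candidate_le_iff' by simp
  next
    assume less: "d\<^sup>2 < 2 * Q"
    show "(d - 2) * Q = Greatest ?Y"
    proof (rule Greatest_equality[symmetric])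
      show "?Y ((d - 2) * Q)" using candidate_le_iff' less even_d two_le_d by auto
    next
      fix y assume "?Y y"
      then obtain j where j: "even j" "y = j * Q" "j * Q \<le> d * P" by blast
      have "d * P < d * Q" using Q_eq d_pos by simp
      then have "j < d" using j(3) by (metis le_less_trans mult_less_cancel2)
      then have "j \<le> d - 2" using j(1) even_d by presburger
      then show "y \<le> (d - 2) * Q" using j(2) by (simp add: mult_right_mono)
    qed
  qed
qed

end

theorem theorem1p6:
  fixes n k r :: nat
  assumes hn: "n \<ge> 2"
    and hdiv: "p (n + 1) = k * d n + r"
    and hr: "1 \<le> r" "r < d n"
  shows
    "(card {m::nat. odd m \<and> 0 < m \<and> m \<le> p n \<and> m * p (n + 1) > (p n)^2} = d n div 2
        \<longleftrightarrow> (d n)^2 < 2 * p (n + 1))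
   \<and> ((LEAST x::nat. (\<exists>j. odd j \<and> x = j * p (n + 1)) \<and> x > (p n)^2)
          = (p n - (d n - 2)) * p (n + 1)
        \<longleftrightarrow> (d n)^2 < 2 * p (n + 1))
   \<and> ((d n - 2) * p (n + 1)
          = (GREATEST x::nat. (\<exists>j. even j \<and> x = j * p (n + 1)) \<and> x \<le> d n * p n)
        \<longleftrightarrow> (d n)^2 < 2 * p (n + 1))
   \<and> (2 * k \<ge> d n \<longleftrightarrow> (d n)^2 < 2 * p (n + 1))"
proof -
  have odd_p: "odd (p n)" "odd (p (n + 1))"
    using prime_odd_nat[OF prime_p p_gt_2] hn by auto
  have less: "p n < p (n + 1)" using p_less_p_Suc hn by simp
  interpret odd_gap "p n" "p (n + 1)" "d n"
    by standard (use odd_p less in \<open>auto simp: d_def\<close>)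
  show ?thesis
    using card_odd_mult_gt_sq_iff least_odd_multiple_gt_sq_iff greatest_even_multiple_le_iff
      twice_quotient_ge_iff[OF even_d hdiv hr] by blast
qed

end
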